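(* Let $A$ be an evolution algebra with natural basis $B=\{e_i:i\in\Lambda\}$ and structure matrix $(\omega_{ki})$, and let $M$ be a modular ideal of $A$ with support $\Lambda_M$. Then: (i) for each $i\in\Lambda$, $e_i\in M$ if and only if $e_i^2\in M$; (ii) $M=\mathrm{lin}\{e_i:i\in\Lambda_M\}$; consequently $M$ is proper if and only if $\Lambda_M\neq\Lambda$; (iii) $\Lambda\setminus\Lambda_M$ is finite, and if $u$ is any modular unit for $M$ then $\Lambda_M\cup\Lambda_u=\Lambda$; (iv) if $M$ is proper, then $\omega_{ii}\neq 0$ for every $i\in\Lambda\setminus\Lambda_M$, the element $u_0=\sum_{i\in\Lambda\setminus\Lambda_M}\frac{1}{\omega_{ii}}e_i$ is a modular unit for $M$, and an element $u\in A$ is a modular unit for $M$ if and only if $u=m+u_0$ for some $m\in M$.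
   Context: An evolution algebra is an algebra $A$ over $\mathbb{K}\in\{\mathbb{R},\mathbb{C}\}$ with a basis $B=\{e_i:i\in\Lambda\}$ (natural basis) such that $e_ie_j=0$ for $i\neq j$; write $e_i^2=\sum_k\omega_{ki}e_k$. For $a=\sum_i\alpha_ie_i$, its support is $\Lambda_a=\{i:\alpha_i\neq 0\}$; for a nonempty $S\subseteq A$, $\Lambda_S=\bigcup_{a\in S}\Lambda_a$. An ideal $M$ of the (commutative) algebra $A$ is modular if there exists $u\in A$ (a modular unit for $M$) with $a-au\in M$ for all $a\in A$. *)

theory Defs
  imports Main "HOL-Library.Function_Algebras"
begin

text \<open>An evolution algebra with natural basis indexed by the type 'i (= Lambda)
 over a field 'k. Elements are finitely supported coordinate functions 'i => 'k;
 the element a = sum_i a_i e_i is represented by its coordinate function a.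
 The structure matrix is om, with om k i = omega_{ki}, i.e. e_i^2 = sum_k om k i e_k.\<close>

definition evo_carrier :: "('i \<Rightarrow> 'k::zero) set" where
  "evo_carrier = {a. finite {i. a i \<noteq> 0}}"

definition evo_supp :: "('i \<Rightarrow> 'k::zero) \<Rightarrow> 'i set" where
  "evo_supp a = {i. a i \<noteq> 0}"

definition evo_suppS :: "('i \<Rightarrow> 'k::zero) set \<Rightarrow> 'i set" where
  "evo_suppS S = (\<Union>a\<in>S. evo_supp a)"

definition evo_basis :: "'i \<Rightarrow> 'i \<Rightarrow> 'k::{zero,one}" where
  "evo_basis i = (\<lambda>j. if j = i then 1 else 0)"

definition evo_smult :: "'k::times \<Rightarrow> ('i \<Rightarrow> 'k) \<Rightarrow> 'i \<Rightarrow> 'k" where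
  "evo_smult c a = (\<lambda>j. c * a j)"

text \<open>Structure matrix of an evolution algebra: each e_i^2 must lie in the algebra,
 i.e. every column of om is finitely supported.\<close>
definition evolution_algebra :: "('i \<Rightarrow> 'i \<Rightarrow> 'k::field) \<Rightarrow> bool" where
  "evolution_algebra om \<longleftrightarrow> (\<forall>i. finite {k. om k i \<noteq> 0})"

definition evo_mult :: "('i \<Rightarrow> 'i \<Rightarrow> 'k::field) \<Rightarrow> ('i \<Rightarrow> 'k) \<Rightarrow> ('i \<Rightarrow> 'k) \<Rightarrow> 'i \<Rightarrow> 'k" where
  "evo_mult om a b = (\<lambda>k. \<Sum>i\<in>evo_supp a \<inter> evo_supp b. a i * b i * om k i)"

definition evo_lin :: "('i \<Rightarrow> 'k::field) set \<Rightarrow> ('i \<Rightarrow> 'k) set" where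
  "evo_lin S = {x. \<exists>F c. finite F \<and> F \<subseteq> S \<and> x = (\<Sum>v\<in>F. evo_smult (c v) v)}"

text \<open>Ideal of the (commutative) evolution algebra: a linear subspace absorbing products.\<close>
definition evo_ideal :: "('i \<Rightarrow> 'i \<Rightarrow> 'k::field) \<Rightarrow> ('i \<Rightarrow> 'k) set \<Rightarrow> bool" where
  "evo_ideal om M \<longleftrightarrow> M \<subseteq> evo_carrier \<and> 0 \<in> M
     \<and> (\<forall>x\<in>M. \<forall>y\<in>M. x + y \<in> M)
     \<and> (\<forall>c. \<forall>x\<in>M. evo_smult c x \<in> M)
     \<and> (\<forall>a\<in>evo_carrier. \<forall>x\<in>M. evo_mult om a x \<in> M)"

definition modular_unit :: "('i \<Rightarrow> 'i \<Rightarrow> 'k::field) \<Rightarrow> ('i \<Rightarrow> 'k) set \<Rightarrow> ('i \<Rightarrow> 'k) \<Rightarrow> bool" where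
  "modular_unit om M u \<longleftrightarrow> u \<in> evo_carrier \<and> (\<forall>a\<in>evo_carrier. a - evo_mult om a u \<in> M)"

definition modular_ideal :: "('i \<Rightarrow> 'i \<Rightarrow> 'k::field) \<Rightarrow> ('i \<Rightarrow> 'k) set \<Rightarrow> bool" where
  "modular_ideal om M \<longleftrightarrow> evo_ideal om M \<and> (\<exists>u. modular_unit om M u)"

end

theory Submission
  imports Defs
begin

text \<open>A modular unit u gives e_i - u_i e_i^2 \<in> M for every basis vector. Since M absorbs
 products with e_i, any a \<in> M with a_i \<noteq> 0 yields e_i^2 \<in> M and hence e_i \<in> M; so M
 consists exactly of the finitely supported elements with support in \<Lambda>_M. Outside \<Lambda>_M
 the relation e_i - u_i e_i^2 \<in> M forces u_i \<omega>_ii = 1, which determines every modular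
 unit on the complement of \<Lambda>_M; this gives the finiteness of the complement and the
 description of all modular units as translates of u_0.\<close>

lemma sum_fun_apply: "(\<Sum>i\<in>S. f i) x = (\<Sum>i\<in>S. f i x)"
  by (induction S rule: infinite_finite_induct) auto

lemma evo_carrier_iff_finite_supp: "a \<in> evo_carrier \<longleftrightarrow> finite (evo_supp a)"
  by (simp add: evo_carrier_def evo_supp_def)

lemma evo_carrier_add:
  fixes a b :: "'i \<Rightarrow> 'k::ab_group_add"
  assumes "a \<in> evo_carrier" "b \<in> evo_carrier"
  shows "a + b \<in> evo_carrier"
  using assms unfolding evo_carrier_def
  by (auto intro: finite_subset[of _ "{i. a i \<noteq> 0} \<union> {i. b i \<noteq> 0}"])

lemma evo_carrier_diff:
  fixes a b :: "'i \<Rightarrow> 'k::ab_group_add"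
  assumes "a \<in> evo_carrier" "b \<in> evo_carrier"
  shows "a - b \<in> evo_carrier"
  using assms unfolding evo_carrier_def
  by (auto intro: finite_subset[of _ "{i. a i \<noteq> 0} \<union> {i. b i \<noteq> 0}"])

lemma evo_basis_apply_self [simp]: "evo_basis i i = (1::'k::zero_neq_one)"
  by (simp add: evo_basis_def)

lemma evo_basis_in_carrier: "evo_basis i \<in> (evo_carrier :: ('i \<Rightarrow> 'k::zero_neq_one) set)"
  unfolding evo_carrier_def evo_basis_def by (auto intro: finite_subset[of _ "{i}"])

lemma inj_evo_basis: "inj (evo_basis :: 'i \<Rightarrow> 'i \<Rightarrow> 'k::zero_neq_one)"
  by (rule injI) (metis evo_basis_apply_self evo_basis_def zero_neq_one)

lemma sum_smult_basis_apply:
  fixes c :: "'i \<Rightarrow> 'k::field"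
  assumes "finite S"
  shows "(\<Sum>i\<in>S. evo_smult (c i) (evo_basis i)) j = (if j \<in> S then c j else 0)"
proof -
  have "(\<Sum>i\<in>S. evo_smult (c i) (evo_basis i)) j = (\<Sum>i\<in>S. if j = i then c i else 0)"
    by (simp add: sum_fun_apply evo_smult_def evo_basis_def if_distrib cong: if_cong)
  also have "\<dots> = (if j \<in> S then c j else 0)"
    using assms by (simp add: sum.delta)
  finally show ?thesis .
qed

lemma evo_carrier_sum_basis:
  fixes a :: "'i \<Rightarrow> 'k::field"
  assumes "a \<in> evo_carrier"
  shows "a = (\<Sum>i\<in>evo_supp a. evo_smult (a i) (evo_basis i))"
  using assms
  by (auto simp: fun_eq_iff sum_smult_basis_apply evo_carrier_iff_finite_supp evo_supp_def)

lemma evo_lin_basis_image: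
  "evo_lin (evo_basis ` S) = {a :: 'i \<Rightarrow> 'k::field. a \<in> evo_carrier \<and> evo_supp a \<subseteq> S}"
proof (intro equalityI subsetI)
  fix x :: "'i \<Rightarrow> 'k" assume "x \<in> evo_lin (evo_basis ` S)"
  then obtain F c where F: "finite F" "F \<subseteq> evo_basis ` S" and x: "x = (\<Sum>v\<in>F. evo_smult (c v) v)"
    by (auto simp: evo_lin_def)
  then obtain G where G: "G \<subseteq> S" "F = evo_basis ` G"
    by (meson subset_image_iff)
  have "finite G"
    using F(1) G(2) inj_evo_basis by (metis finite_imageD inj_on_subset subset_UNIV)
  have "x = (\<Sum>i\<in>G. evo_smult (c (evo_basis i)) (evo_basis i))"
    unfolding x G(2) by (simp add: sum.reindex[OF inj_on_subset[OF inj_evo_basis subset_UNIV]])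
  then have "x j = (if j \<in> G then c (evo_basis j) else 0)" for j
    using \<open>finite G\<close> by (simp add: sum_smult_basis_apply)
  then have "evo_supp x \<subseteq> G"
    by (auto simp: evo_supp_def)
  then show "x \<in> {a. a \<in> evo_carrier \<and> evo_supp a \<subseteq> S}"
    using finite_subset[OF _ \<open>finite G\<close>] G(1) by (auto simp: evo_carrier_iff_finite_supp)
next
  fix x :: "'i \<Rightarrow> 'k" assume "x \<in> {a. a \<in> evo_carrier \<and> evo_supp a \<subseteq> S}"
  then have x: "finite (evo_supp x)" "evo_supp x \<subseteq> S"
    by (auto simp: evo_carrier_iff_finite_supp)
  have "x = (\<Sum>i\<in>evo_supp x. evo_smult (x i) (evo_basis i))"
    using x(1) by (intro evo_carrier_sum_basis) (simp add: evo_carrier_iff_finite_supp)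
  also have "\<dots> = (\<Sum>v\<in>evo_basis ` evo_supp x. evo_smult (x (inv evo_basis v)) v)"
    unfolding sum.reindex[OF inj_on_subset[OF inj_evo_basis subset_UNIV]] comp_def
    by (simp only: inv_f_f[OF inj_evo_basis])
  finally have "x = (\<Sum>v\<in>evo_basis ` evo_supp x. evo_smult (x (inv evo_basis v)) v)" .
  moreover have "finite (evo_basis ` evo_supp x)" "evo_basis ` evo_supp x \<subseteq> evo_basis ` S"
    using x by auto
  ultimately show "x \<in> evo_lin (evo_basis ` S)"
    unfolding evo_lin_def by (intro CollectI exI conjI) assumption+
qed

lemma evo_mult_eq_sum_over:
  assumes "finite F" "evo_supp a \<subseteq> F"
  shows "evo_mult om a b k = (\<Sum>i\<in>F. a i * b i * om k i)"
  unfolding evo_mult_def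
  by (rule sum.mono_neutral_left) (use assms in \<open>auto simp: evo_supp_def\<close>)

lemma evo_mult_add_right:
  assumes "a \<in> evo_carrier"
  shows "evo_mult om a (b + c) = evo_mult om a b + evo_mult om a c"
proof -
  have "finite (evo_supp a)"
    using assms by (simp add: evo_carrier_iff_finite_supp)
  then show ?thesis
    by (simp add: fun_eq_iff evo_mult_eq_sum_over[of "evo_supp a"] ring_distribs sum.distrib)
qed

lemma evo_mult_basis_left: "evo_mult om (evo_basis i) a = evo_smult (a i) (\<lambda>k. om k i)"
  by (auto simp: fun_eq_iff evo_mult_eq_sum_over[of "{i}"] evo_supp_def evo_smult_def evo_basis_def)

lemma evo_mult_basis_self: "evo_mult om (evo_basis i) (evo_basis i) = (\<lambda>k. om k i)"
  by (simp add: evo_mult_basis_left evo_smult_def)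

lemma evo_ideal_subset_carrier: "evo_ideal om M \<Longrightarrow> M \<subseteq> evo_carrier"
  by (simp add: evo_ideal_def)

lemma evo_ideal_zero: "evo_ideal om M \<Longrightarrow> 0 \<in> M"
  by (simp add: evo_ideal_def)

lemma evo_ideal_add: "evo_ideal om M \<Longrightarrow> x \<in> M \<Longrightarrow> y \<in> M \<Longrightarrow> x + y \<in> M"
  by (simp add: evo_ideal_def)

lemma evo_ideal_smult: "evo_ideal om M \<Longrightarrow> x \<in> M \<Longrightarrow> evo_smult c x \<in> M"
  by (simp add: evo_ideal_def)

lemma evo_ideal_mult_left:
  "evo_ideal om M \<Longrightarrow> a \<in> evo_carrier \<Longrightarrow> x \<in> M \<Longrightarrow> evo_mult om a x \<in> M"
  by (simp add: evo_ideal_def)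

lemma evo_ideal_sum:
  assumes "evo_ideal om M" "\<And>i. i \<in> S \<Longrightarrow> f i \<in> M"
  shows "(\<Sum>i\<in>S. f i) \<in> M"
  using assms(2)
proof (induction S rule: infinite_finite_induct)
  case (insert x F)
  then have "f x + sum f F \<in> M"
    by (intro evo_ideal_add[OF assms(1)]) simp_all
  then show ?case
    unfolding sum.insert[OF insert.hyps] .
qed (simp_all add: evo_ideal_zero[OF assms(1)])

lemma evo_ideal_diff:
  fixes om :: "'i \<Rightarrow> 'i \<Rightarrow> 'k::field"
  assumes "evo_ideal om M" "x \<in> M" "y \<in> M"
  shows "x - y \<in> M"
proof -
  have "x + evo_smult (-1) y \<in> M"
    using evo_ideal_add[OF assms(1,2) evo_ideal_smult[OF assms(1,3)]] .
  moreover have "x + evo_smult (-1) y = x - y"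
    by (simp add: evo_smult_def fun_eq_iff)
  ultimately show ?thesis
    by (rule back_subst)
qed

lemma modular_unit_basis:
  assumes "modular_unit om M u"
  shows "evo_basis i - evo_smult (u i) (\<lambda>k. om k i) \<in> M"
proof -
  have "\<forall>a\<in>evo_carrier. a - evo_mult om a u \<in> M"
    using assms by (simp add: modular_unit_def)
  then have "evo_basis i - evo_mult om (evo_basis i) u \<in> M"
    using evo_basis_in_carrier by (rule bspec)
  then show ?thesis
    by (simp only: evo_mult_basis_left)
qed

lemma modular_unit_add_ideal:
  fixes om :: "'i \<Rightarrow> 'i \<Rightarrow> 'k::field"
  assumes "evo_ideal om M" "modular_unit om M u" "m \<in> M"
  shows "modular_unit om M (m + u)"
  unfolding modular_unit_def
proof (intro conjI ballI)
  show "m + u \<in> evo_carrier"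
    using assms evo_ideal_subset_carrier
    by (intro evo_carrier_add) (auto simp: modular_unit_def)
  fix a :: "'i \<Rightarrow> 'k" assume a: "a \<in> evo_carrier"
  have "a - evo_mult om a u \<in> M"
    using assms(2) a by (simp add: modular_unit_def)
  moreover have "evo_mult om a m \<in> M"
    by (rule evo_ideal_mult_left[OF assms(1) a assms(3)])
  ultimately have "a - evo_mult om a u - evo_mult om a m \<in> M"
    by (rule evo_ideal_diff[OF assms(1)])
  then show "a - evo_mult om a (m + u) \<in> M"
    by (simp add: evo_mult_add_right[OF a] diff_diff_eq add.commute)
qed

text \<open>The element u_0 of the paper. The sum is only meaningful because the complement of
 \<Lambda>_M is finite for modular M; otherwise it would silently be 0.\<close>
definition canonical_modular_unit :: "('i \<Rightarrow> 'i \<Rightarrow> 'k::field) \<Rightarrow> ('i \<Rightarrow> 'k) set \<Rightarrow> 'i \<Rightarrow> 'k" where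
  "canonical_modular_unit om M = (\<Sum>i\<in>- evo_suppS M. evo_smult (1 / om i i) (evo_basis i))"

context
  fixes om :: "'i \<Rightarrow> 'i \<Rightarrow> 'k::field" and M :: "('i \<Rightarrow> 'k) set"
  assumes modular: "modular_ideal om M"
begin

lemma modular_ideal_is_ideal: "evo_ideal om M"
  using modular by (simp add: modular_ideal_def)

lemma modular_ideal_has_unit: obtains u where "modular_unit om M u"
  using modular by (auto simp: modular_ideal_def)

lemma modular_ideal_basis_mem_if_square_mem:
  assumes "(\<lambda>k. om k i) \<in> M"
  shows "evo_basis i \<in> M"
proof -
  obtain u where u: "modular_unit om M u"
    by (rule modular_ideal_has_unit)
  have "evo_basis i - evo_smult (u i) (\<lambda>k. om k i) + evo_smult (u i) (\<lambda>k. om k i) \<in> M"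
    using modular_unit_basis[OF u] evo_ideal_smult[OF modular_ideal_is_ideal assms]
    by (rule evo_ideal_add[OF modular_ideal_is_ideal])
  then show ?thesis
    by simp
qed

lemma modular_ideal_basis_mem_iff_square_mem:
  "evo_basis i \<in> M \<longleftrightarrow> evo_mult om (evo_basis i) (evo_basis i) \<in> M"
proof
  assume "evo_basis i \<in> M"
  then show "evo_mult om (evo_basis i) (evo_basis i) \<in> M"
    by (rule evo_ideal_mult_left[OF modular_ideal_is_ideal evo_basis_in_carrier])
next
  assume "evo_mult om (evo_basis i) (evo_basis i) \<in> M"
  then show "evo_basis i \<in> M"
    by (simp add: evo_mult_basis_self modular_ideal_basis_mem_if_square_mem)
qed

lemma modular_ideal_basis_mem_if_in_suppS:
  assumes "i \<in> evo_suppS M"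
  shows "evo_basis i \<in> M"
proof -
  obtain x where x: "x \<in> M" "x i \<noteq> 0"
    using assms by (auto simp: evo_suppS_def evo_supp_def)
  have "evo_mult om (evo_basis i) x \<in> M"
    by (rule evo_ideal_mult_left[OF modular_ideal_is_ideal evo_basis_in_carrier x(1)])
  then have "evo_smult (1 / x i) (evo_smult (x i) (\<lambda>k. om k i)) \<in> M"
    unfolding evo_mult_basis_left by (rule evo_ideal_smult[OF modular_ideal_is_ideal])
  then have "(\<lambda>k. om k i) \<in> M"
    using x(2) by (simp add: evo_smult_def)
  then show ?thesis
    by (rule modular_ideal_basis_mem_if_square_mem)
qed

lemma modular_ideal_mem_iff: "x \<in> M \<longleftrightarrow> x \<in> evo_carrier \<and> evo_supp x \<subseteq> evo_suppS M"
proof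
  assume "x \<in> M"
  then show "x \<in> evo_carrier \<and> evo_supp x \<subseteq> evo_suppS M"
    using evo_ideal_subset_carrier[OF modular_ideal_is_ideal] by (auto simp: evo_suppS_def)
next
  assume x: "x \<in> evo_carrier \<and> evo_supp x \<subseteq> evo_suppS M"
  have "(\<Sum>i\<in>evo_supp x. evo_smult (x i) (evo_basis i)) \<in> M"
  proof (rule evo_ideal_sum[OF modular_ideal_is_ideal])
    fix i assume "i \<in> evo_supp x"
    with x have "evo_basis i \<in> M"
      by (auto intro: modular_ideal_basis_mem_if_in_suppS)
    then show "evo_smult (x i) (evo_basis i) \<in> M"
      by (rule evo_ideal_smult[OF modular_ideal_is_ideal])
  qed
  moreover have "(\<Sum>i\<in>evo_supp x. evo_smult (x i) (evo_basis i)) = x"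
    using x by (intro evo_carrier_sum_basis[symmetric]) blast
  ultimately show "x \<in> M"
    by (rule back_subst)
qed

lemma modular_ideal_eq_lin_basis: "M = evo_lin (evo_basis ` evo_suppS M)"
  by (auto simp: evo_lin_basis_image modular_ideal_mem_iff)

lemma modular_ideal_proper_iff: "M \<noteq> evo_carrier \<longleftrightarrow> evo_suppS M \<noteq> UNIV"
proof
  assume "M \<noteq> evo_carrier"
  then show "evo_suppS M \<noteq> UNIV"
    using modular_ideal_mem_iff by auto
next
  assume "evo_suppS M \<noteq> UNIV"
  then obtain i where "i \<notin> evo_suppS M"
    by auto
  moreover have "i \<in> evo_supp (evo_basis i :: 'i \<Rightarrow> 'k)"
    by (simp add: evo_supp_def)
  ultimately have "evo_basis i \<notin> M"
    using modular_ideal_mem_iff by blast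
  moreover have "evo_basis i \<in> (evo_carrier :: ('i \<Rightarrow> 'k) set)"
    by (rule evo_basis_in_carrier)
  ultimately show "M \<noteq> evo_carrier"
    by blast
qed

lemma modular_unit_diag_outside_suppS:
  assumes "modular_unit om M u" "i \<notin> evo_suppS M"
  shows "u i * om i i = 1"
proof -
  have "evo_supp (evo_basis i - evo_smult (u i) (\<lambda>k. om k i)) \<subseteq> evo_suppS M"
    using modular_unit_basis[OF assms(1)] by (simp add: modular_ideal_mem_iff)
  with assms(2) have "i \<notin> evo_supp (evo_basis i - evo_smult (u i) (\<lambda>k. om k i))"
    by blast
  then show ?thesis
    by (simp add: evo_supp_def evo_smult_def)
qed

lemma modular_ideal_diag_nonzero:
  assumes "i \<in> - evo_suppS M"
  shows "om i i \<noteq> 0"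
proof -
  obtain u where u: "modular_unit om M u"
    by (rule modular_ideal_has_unit)
  have "u i * om i i = 1"
    using assms by (intro modular_unit_diag_outside_suppS[OF u]) simp
  then show ?thesis
    by auto
qed

lemma modular_unit_supp_covers:
  assumes "modular_unit om M u"
  shows "evo_suppS M \<union> evo_supp u = UNIV"
proof -
  have "i \<in> evo_supp u" if "i \<notin> evo_suppS M" for i
    using modular_unit_diag_outside_suppS[OF assms that] by (auto simp: evo_supp_def)
  then show ?thesis
    by blast
qed

lemma modular_ideal_finite_compl_suppS: "finite (- evo_suppS M)"
proof -
  obtain u where u: "modular_unit om M u"
    by (rule modular_ideal_has_unit)
  then have "- evo_suppS M \<subseteq> evo_supp u"
    using modular_unit_supp_covers by blast
  moreover have "finite (evo_supp u)"
    using u by (simp add: modular_unit_def evo_carrier_iff_finite_supp)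
  ultimately show ?thesis
    by (rule finite_subset)
qed

lemma canonical_modular_unit_apply:
  "canonical_modular_unit om M j = (if j \<in> evo_suppS M then 0 else 1 / om j j)"
  by (simp add: canonical_modular_unit_def sum_smult_basis_apply modular_ideal_finite_compl_suppS)

lemma canonical_modular_unit_in_carrier: "canonical_modular_unit om M \<in> evo_carrier"
proof -
  have "evo_supp (canonical_modular_unit om M) \<subseteq> - evo_suppS M"
    by (auto simp: evo_supp_def canonical_modular_unit_apply)
  then show ?thesis
    unfolding evo_carrier_iff_finite_supp
    by (rule finite_subset) (rule modular_ideal_finite_compl_suppS)
qed

lemma modular_unit_diff_canonical:
  assumes "modular_unit om M u"
  shows "u - canonical_modular_unit om M \<in> M"
proof -
  have "u i = 1 / om i i" if "i \<notin> evo_suppS M" for i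
  proof -
    have "u i * om i i = 1"
      by (rule modular_unit_diag_outside_suppS[OF assms that])
    moreover from this have "om i i \<noteq> 0"
      by auto
    ultimately show ?thesis
      by (simp add: nonzero_eq_divide_eq)
  qed
  then have "evo_supp (u - canonical_modular_unit om M) \<subseteq> evo_suppS M"
    by (auto simp: evo_supp_def canonical_modular_unit_apply)
  moreover have "u - canonical_modular_unit om M \<in> evo_carrier"
    using assms canonical_modular_unit_in_carrier
    by (intro evo_carrier_diff) (simp_all add: modular_unit_def)
  ultimately show ?thesis
    by (simp add: modular_ideal_mem_iff)
qed

lemma modular_unit_canonical: "modular_unit om M (canonical_modular_unit om M)"
proof -
  obtain u where u: "modular_unit om M u"
    by (rule modular_ideal_has_unit)
  have "0 - (u - canonical_modular_unit om M) \<in> M"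
    using evo_ideal_zero[OF modular_ideal_is_ideal] modular_unit_diff_canonical[OF u]
    by (rule evo_ideal_diff[OF modular_ideal_is_ideal])
  from modular_unit_add_ideal[OF modular_ideal_is_ideal u this] show ?thesis
    by simp
qed

lemma modular_unit_iff_canonical:
  "modular_unit om M u \<longleftrightarrow> (\<exists>m\<in>M. u = m + canonical_modular_unit om M)"
proof
  assume "modular_unit om M u"
  then show "\<exists>m\<in>M. u = m + canonical_modular_unit om M"
    using modular_unit_diff_canonical by (intro bexI[of _ "u - canonical_modular_unit om M"]) auto
next
  assume "\<exists>m\<in>M. u = m + canonical_modular_unit om M"
  then show "modular_unit om M u"
    using modular_unit_add_ideal[OF modular_ideal_is_ideal modular_unit_canonical] by blast
qed

end

theorem theorem3p2:
  fixes om :: "'i \<Rightarrow> 'i \<Rightarrow> 'k::field" and M :: "('i \<Rightarrow> 'k) set"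
  assumes evo: "evolution_algebra om"
    and modM: "modular_ideal om M"
  shows
    "(\<forall>i. evo_basis i \<in> M \<longleftrightarrow> evo_mult om (evo_basis i) (evo_basis i) \<in> M)
   \<and> M = evo_lin (evo_basis ` evo_suppS M)
   \<and> (M \<noteq> evo_carrier \<longleftrightarrow> evo_suppS M \<noteq> UNIV)
   \<and> finite (- evo_suppS M)
   \<and> (\<forall>u. modular_unit om M u \<longrightarrow> evo_suppS M \<union> evo_supp u = UNIV)
   \<and> (M \<noteq> evo_carrier \<longrightarrow>
        (\<forall>i\<in>- evo_suppS M. om i i \<noteq> 0)
      \<and> modular_unit om M (\<Sum>i\<in>- evo_suppS M. evo_smult (1 / om i i) (evo_basis i))
      \<and> (\<forall>u. modular_unit om M u \<longleftrightarrow>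
            (\<exists>m\<in>M. u = m + (\<Sum>i\<in>- evo_suppS M. evo_smult (1 / om i i) (evo_basis i)))))"
  using modular_ideal_basis_mem_iff_square_mem[OF modM]
    modular_ideal_eq_lin_basis[OF modM]
    modular_ideal_proper_iff[OF modM]
    modular_ideal_finite_compl_suppS[OF modM]
    modular_unit_supp_covers[OF modM]
    modular_ideal_diag_nonzero[OF modM]
    modular_unit_canonical[OF modM]
    modular_unit_iff_canonical[OF modM]
  unfolding canonical_modular_unit_def[symmetric]
  by (intro conjI impI allI ballI; blast)

end
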